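(* Let $r_1 \ge 2$ and $x_1 \ge 1$ be integers, let $d = x_1 + r_1 - 1$, and let $\mathbf{q} \in \mathbb{Z}^d$ be the vector whose first $x_1$ entries equal $r_1$ and whose last $r_1-1$ entries equal $1 + r_1 x_1$. Let $\Delta_{(1,\mathbf{q})} = \mathrm{conv}\{\mathbf{e}_1,\ldots,\mathbf{e}_d,-\mathbf{q}\} \subset \mathbb{R}^d$. For $\mathbf{t} = (t_1,\ldots,t_d) \in \mathbb{R}^d$ define \[ \lambda_k(\mathbf{t}) = \begin{cases} \sum_{j \ne k} t_j - x_1 r_1 t_k, & 1 \le k \le x_1,\\ \sum_{j\ne k} t_j - (r_1-1) t_k, & x_1+1 \le k \le d,\\ \sum_{j=1}^d t_j, & k = d+1,\end{cases} \] where the sums over $j$ range over $1 \le j \le d$. Then the inequalities $\lambda_k(\mathbf{t}) \le 1$ for $1 \le k \le d+1$ form an irredundant $\mathcal{H}$-description of $\Delta_{(1,\mathbf{q})}$.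
   Context: $\mathbf{e}_i$ is the $i$-th standard basis vector of $\mathbb{R}^d$. *)

theory Defs
  imports "HOL-Analysis.Analysis"
begin

text \<open>Coordinates are indexed by 1..d (d = x1 + r1 - 1).
  The j-th entry of q: r1 for 1 <= j <= x1, and 1 + r1*x1 for x1 < j <= d.\<close>
definition qvec :: "nat \<Rightarrow> nat \<Rightarrow> nat \<Rightarrow> real" where
  "qvec x1 r1 j = (if j \<le> x1 then real r1 else 1 + real r1 * real x1)"

definition lam :: "nat \<Rightarrow> nat \<Rightarrow> (nat \<Rightarrow> real) \<Rightarrow> nat \<Rightarrow> real" where
  "lam x1 r1 t k =
     (let d = x1 + r1 - 1 in
      if 1 \<le> k \<and> k \<le> x1 then (\<Sum>j\<in>{1..d}-{k}. t j) - real x1 * real r1 * t k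
      else if x1 + 1 \<le> k \<and> k \<le> d then (\<Sum>j\<in>{1..d}-{k}. t j) - (real r1 - 1) * t k
      else (\<Sum>j\<in>{1..d}. t j))"

end

(* Delta is the simplex with vertices e_1, ..., e_d and -q, where q has positive entries, and
   each inequality lambda_k <= 1 is the facet inequality through all vertices but one:
   sum_j t_j <= 1 through e_1, ..., e_d, and sum_j t_j - c_k t_k <= 1 through the vertices other
   than e_k, where c_k q_k = 1 + sum_j q_j.  For this q one has 1 + sum_j q_j = r1 (1 + r1 x1), so
   c_k = 1 + x1 r1 for k <= x1 and c_k = r1 otherwise, which is exactly lambda_k.  Barycentric
   coordinates show that the d + 1 facet inequalities cut out the simplex, and a point violating
   just one of them (a positive multiple of q, resp. of -e_k) shows that none can be dropped. *)

theory Submission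
  imports Defs
begin

definition facet_coeff :: "real^'n \<Rightarrow> 'n \<Rightarrow> real" where
  "facet_coeff q k = (1 + (\<Sum>i\<in>UNIV. q $ i)) / q $ k"

text \<open>\<open>None\<close> indexes the facet opposite the vertex \<open>-q\<close>, \<open>Some k\<close> the facet opposite \<open>axis k 1\<close>.\<close>

definition simplex_normal :: "real^'n \<Rightarrow> 'n option \<Rightarrow> real^'n" where
  "simplex_normal q f = (case f of
     None \<Rightarrow> 1
   | Some k \<Rightarrow> 1 - facet_coeff q k *\<^sub>R axis k 1)"

lemma inner_one_vec: "(1::real^'n) \<bullet> t = (\<Sum>i\<in>UNIV. t $ i)"
  by (simp add: inner_vec_def)

lemma sum_axis_components: "(\<Sum>i\<in>UNIV. axis k c $ i) = c"
  by (simp add: axis_def)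

lemma inner_simplex_normal_None: "simplex_normal q None \<bullet> t = (\<Sum>i\<in>UNIV. t $ i)"
  by (simp add: simplex_normal_def inner_one_vec)

lemma inner_simplex_normal_Some:
  "simplex_normal q (Some k) \<bullet> t = (\<Sum>i\<in>UNIV. t $ i) - facet_coeff q k * t $ k"
  by (simp add: simplex_normal_def inner_diff_left inner_axis' inner_one_vec)

lemma facet_coeff_gt_one:
  assumes "\<forall>i. 0 < q $ i"
  shows "1 < facet_coeff q k"
proof -
  have "q $ k \<le> (\<Sum>i\<in>UNIV. q $ i)"
    using assms by (intro member_le_sum) (auto intro: less_imp_le)
  then show ?thesis
    using assms by (simp add: facet_coeff_def)
qed

lemma facet_coeff_mult: "0 < q $ k \<Longrightarrow> facet_coeff q k * q $ k = 1 + (\<Sum>i\<in>UNIV. q $ i)"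
  by (simp add: facet_coeff_def)

lemma sum_UNIV_option: "(\<Sum>x\<in>UNIV. g x) = g None + (\<Sum>i\<in>UNIV. g (Some i))"
  for g :: "'a::finite option \<Rightarrow> 'b::comm_monoid_add"
  by (simp add: UNIV_option_conv sum.reindex)

lemma convex_hull_simplex_subset_halfspaces:
  fixes q :: "real^'n"
  assumes "\<forall>i. 0 < q $ i"
  shows "convex hull (range (\<lambda>i. axis i 1) \<union> {-q}) \<subseteq> {t. \<forall>f. simplex_normal q f \<bullet> t \<le> 1}"
proof (rule hull_minimal)
  have "{t. \<forall>f. simplex_normal q f \<bullet> t \<le> (1::real)} = (\<Inter>f. {t. simplex_normal q f \<bullet> t \<le> 1})"
    by auto
  then show "convex {t. \<forall>f. simplex_normal q f \<bullet> t \<le> (1::real)}"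
    by (simp add: convex_INT convex_halfspace_le)
  have "(\<Sum>i\<in>UNIV. q $ i) \<ge> 0"
    using assms by (intro sum_nonneg) (auto intro: less_imp_le)
  moreover have "facet_coeff q k \<ge> 0" "facet_coeff q k * q $ k = 1 + (\<Sum>i\<in>UNIV. q $ i)" for k
    using facet_coeff_gt_one[OF assms, of k] facet_coeff_mult[of q k] assms by auto
  ultimately have "simplex_normal q f \<bullet> axis i 1 \<le> 1 \<and> simplex_normal q f \<bullet> -q \<le> 1" for f i
    by (cases f) (auto simp: inner_simplex_normal_None inner_simplex_normal_Some axis_def sum_negf)
  then show "range (\<lambda>i. axis i 1) \<union> {-q} \<subseteq> {t. \<forall>f. simplex_normal q f \<bullet> t \<le> 1}"
    by auto
qed

lemma convex_combination_in_convex_hull_simplex: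
  fixes q :: "real^'n"
  assumes "b \<ge> 0" and "\<And>i. a i \<ge> 0" and "b + (\<Sum>i\<in>UNIV. a i) = 1"
  shows "(\<Sum>i\<in>UNIV. a i *\<^sub>R axis i 1) - b *\<^sub>R q \<in> convex hull (range (\<lambda>i. axis i 1) \<union> {-q})"
proof -
  define w where "w f = (case f of None \<Rightarrow> b | Some i \<Rightarrow> a i)" for f
  define p where "p f = (case f of None \<Rightarrow> -q | Some i \<Rightarrow> axis i 1)" for f
  have "(\<Sum>f\<in>UNIV. w f *\<^sub>R p f) \<in> convex hull (range (\<lambda>i. axis i 1) \<union> {-q})"
  proof (rule convex_sum[OF finite convex_convex_hull])
    show "(\<Sum>f\<in>UNIV. w f) = 1"
      using assms(3) by (simp add: sum_UNIV_option w_def)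
    show "0 \<le> w f" for f
      using assms(1,2) by (simp add: w_def split: option.split)
    show "p f \<in> convex hull (range (\<lambda>i. axis i 1) \<union> {-q})" for f
      by (rule hull_inc) (simp add: p_def split: option.split)
  qed
  then show ?thesis
    by (simp add: sum_UNIV_option w_def p_def)
qed

lemma halfspaces_subset_convex_hull_simplex:
  fixes q :: "real^'n"
  assumes "\<forall>i. 0 < q $ i"
  shows "{t. \<forall>f. simplex_normal q f \<bullet> t \<le> 1} \<subseteq> convex hull (range (\<lambda>i. axis i 1) \<union> {-q})"
proof
  fix t :: "real^'n"
  assume t: "t \<in> {t. \<forall>f. simplex_normal q f \<bullet> t \<le> 1}"
  define Q where "Q = (\<Sum>i\<in>UNIV. q $ i)"
  define T where "T = (\<Sum>i\<in>UNIV. t $ i)"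
  define b where "b = (1 - T) / (1 + Q)"
  define a where "a i = t $ i + b * q $ i" for i
  \<comment> \<open>\<open>b\<close> and \<open>a i\<close> are the barycentric coordinates of \<open>t\<close> for the vertices \<open>-q\<close> and \<open>axis i 1\<close>\<close>
  have "Q \<ge> 0"
    unfolding Q_def using assms by (intro sum_nonneg) (auto intro: less_imp_le)
  have "T \<le> 1"
    using t inner_simplex_normal_None[of q t] unfolding T_def by (metis mem_Collect_eq)
  then have "b \<ge> 0"
    using \<open>Q \<ge> 0\<close> by (simp add: b_def)
  have "a i \<ge> 0" for i
  proof -
    have "facet_coeff q i * a i = facet_coeff q i * t $ i + b * (1 + Q)"
      using facet_coeff_mult[of q i] assms by (simp add: a_def Q_def algebra_simps)
    also have "\<dots> = 1 - simplex_normal q (Some i) \<bullet> t"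
      using \<open>Q \<ge> 0\<close> by (simp add: b_def inner_simplex_normal_Some T_def)
    finally have "facet_coeff q i * a i \<ge> 0"
      using t by simp
    then show ?thesis
      using facet_coeff_gt_one[OF assms, of i] by (simp add: zero_le_mult_iff)
  qed
  have "b + (\<Sum>i\<in>UNIV. a i) = 1"
  proof -
    have "b + (\<Sum>i\<in>UNIV. a i) = b * (1 + Q) + T"
      by (simp add: a_def T_def Q_def sum.distrib sum_distrib_left algebra_simps)
    then show ?thesis
      using \<open>Q \<ge> 0\<close> by (simp add: b_def)
  qed
  have "t = (\<Sum>i\<in>UNIV. a i *\<^sub>R axis i 1) - b *\<^sub>R q"
    by (simp add: vec_eq_iff a_def axis_def if_distrib cong: if_cong)
  also have "\<dots> \<in> convex hull (range (\<lambda>i. axis i 1) \<union> {-q})"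
    by (rule convex_combination_in_convex_hull_simplex) fact+
  finally show "t \<in> convex hull (range (\<lambda>i. axis i 1) \<union> {-q})" .
qed

lemma convex_hull_simplex_eq_halfspaces:
  fixes q :: "real^'n"
  assumes "\<forall>i. 0 < q $ i"
  shows "convex hull (range (\<lambda>i. axis i 1) \<union> {-q}) = {t. \<forall>f. simplex_normal q f \<bullet> t \<le> 1}"
  using convex_hull_simplex_subset_halfspaces[OF assms] halfspaces_subset_convex_hull_simplex[OF assms]
  by (rule subset_antisym)

lemma simplex_normal_irredundant:
  fixes q :: "real^'n"
  assumes "\<forall>i. 0 < q $ i"
  shows "\<exists>t. (\<forall>g. g \<noteq> f \<longrightarrow> simplex_normal q g \<bullet> t \<le> 1) \<and> 1 < simplex_normal q f \<bullet> t"
proof (cases f)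
  case None
  define Q where "Q = (\<Sum>i\<in>UNIV. q $ i)"
  have "Q > 0"
    unfolding Q_def using assms by (intro sum_pos) auto
  define t where "t = (2 / Q) *\<^sub>R q"
  have "simplex_normal q (Some k) \<bullet> t = - 2 / Q" for k
    using facet_coeff_mult[of q k] assms
    by (simp add: t_def inner_simplex_normal_Some Q_def sum_distrib_left[symmetric] algebra_simps)
  then have "simplex_normal q g \<bullet> t \<le> 1" if "g \<noteq> None" for g
    using that \<open>Q > 0\<close> by (cases g) (auto intro: order.trans[of _ 0])
  moreover have "simplex_normal q None \<bullet> t = 2"
    using \<open>Q > 0\<close> by (simp add: t_def inner_simplex_normal_None Q_def sum_distrib_left[symmetric])
  ultimately show ?thesis
    using None by (intro exI[of _ t]) auto
next
  case (Some k)
  define c where "c = facet_coeff q k"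
  have "c > 1"
    unfolding c_def using facet_coeff_gt_one[OF assms] .
  define t where "t = - (2 / (c - 1)) *\<^sub>R axis k (1::real)"
  have "simplex_normal q g \<bullet> t = - 2 / (c - 1)" if "g \<noteq> Some k" for g
    using that
    by (cases g) (auto simp: t_def inner_simplex_normal_None inner_simplex_normal_Some sum_axis_components axis_def)
  then have "simplex_normal q g \<bullet> t \<le> 1" if "g \<noteq> Some k" for g
    using that \<open>c > 1\<close> by (auto intro: order.trans[of _ 0])
  moreover have "simplex_normal q (Some k) \<bullet> t = 2"
    using \<open>c > 1\<close>
    by (simp add: t_def inner_simplex_normal_Some sum_axis_components c_def[symmetric] field_simps)
  ultimately show ?thesis
    using Some by (intro exI[of _ t]) auto
qed

lemma irredundant_description_reindex:
  fixes u :: "'i \<Rightarrow> 'a \<Rightarrow> real" and v :: "'f \<Rightarrow> 'a \<Rightarrow> real"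
  assumes "bij_betw \<phi> I UNIV"
    and "\<And>k t. k \<in> I \<Longrightarrow> u k t = v (\<phi> k) t"
    and "P = {t. \<forall>f. v f t \<le> 1}"
    and "\<And>f. \<exists>t. (\<forall>g. g \<noteq> f \<longrightarrow> v g t \<le> 1) \<and> 1 < v f t"
  shows "P = {t. \<forall>k\<in>I. u k t \<le> 1} \<and> (\<forall>k\<in>I. {t. \<forall>m\<in>I - {k}. u m t \<le> 1} \<noteq> P)"
proof
  have "(\<forall>k\<in>I. u k t \<le> 1) \<longleftrightarrow> (\<forall>f. v f t \<le> 1)" for t
    using bij_betw_ball[OF assms(1), of "\<lambda>f. v f t \<le> 1"] assms(2) by simp
  then show "P = {t. \<forall>k\<in>I. u k t \<le> 1}"
    using assms(3) by simp
  show "\<forall>k\<in>I. {t. \<forall>m\<in>I - {k}. u m t \<le> 1} \<noteq> P"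
  proof
    fix k
    assume "k \<in> I"
    obtain t where others: "\<forall>g. g \<noteq> \<phi> k \<longrightarrow> v g t \<le> 1" and violated: "1 < v (\<phi> k) t"
      using assms(4) by blast
    have "\<phi> m \<noteq> \<phi> k" if "m \<in> I - {k}" for m
      using that \<open>k \<in> I\<close> assms(1) by (auto simp: bij_betw_def inj_on_eq_iff)
    then have "t \<in> {t. \<forall>m\<in>I - {k}. u m t \<le> 1}"
      using others assms(2) by auto
    moreover have "t \<notin> P"
      using violated assms(3) by (auto simp: not_le)
    ultimately show "{t. \<forall>m\<in>I - {k}. u m t \<le> 1} \<noteq> P"
      by blast
  qed
qed

lemma qvec_pos: "r1 \<ge> 1 \<Longrightarrow> 0 < qvec x1 r1 j"
  by (simp add: qvec_def add_pos_nonneg)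

lemma one_plus_sum_qvec:
  assumes "r1 \<ge> 1"
  shows "1 + (\<Sum>j\<in>{1..x1+r1-1}. qvec x1 r1 j) = real r1 * (1 + real r1 * real x1)"
proof -
  have split: "{1..x1+r1-1} = {1..x1} \<union> {x1+1..x1+r1-1}"
    using assms by auto
  have "(\<Sum>j\<in>{1..x1+r1-1}. qvec x1 r1 j)
      = (\<Sum>j\<in>{1..x1}. qvec x1 r1 j) + (\<Sum>j\<in>{x1+1..x1+r1-1}. qvec x1 r1 j)"
    unfolding split by (rule sum.union_disjoint) auto
  also have "\<dots> = real x1 * real r1 + (real r1 - 1) * (1 + real r1 * real x1)"
    using assms by (simp add: qvec_def of_nat_diff)
  finally show ?thesis
    by (simp add: algebra_simps)
qed

lemma lam_eq_facet_form:
  assumes "r1 \<ge> 1" and "k \<in> {1..x1+r1-1}"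
  shows "lam x1 r1 t k = (\<Sum>j\<in>{1..x1+r1-1}. t j)
           - (1 + (\<Sum>j\<in>{1..x1+r1-1}. qvec x1 r1 j)) / qvec x1 r1 k * t k"
proof -
  have sum_minus: "(\<Sum>j\<in>{1..x1+r1-1}-{k}. t j) = (\<Sum>j\<in>{1..x1+r1-1}. t j) - t k"
    using assms(2) by (simp add: sum_diff1)
  have "(1 + (\<Sum>j\<in>{1..x1+r1-1}. qvec x1 r1 j)) / qvec x1 r1 k
      = real r1 * (1 + real r1 * real x1) / qvec x1 r1 k"
    by (simp only: one_plus_sum_qvec[OF assms(1)])
  also have "\<dots> = (if k \<le> x1 then real x1 * real r1 + 1 else real r1)"
    using assms(1) by (auto simp: qvec_def field_simps add_nonneg_eq_0_iff)
  finally show ?thesis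
    using assms sum_minus by (auto simp: lam_def Let_def algebra_simps of_nat_diff)
qed

lemma lam_last:
  "r1 \<ge> 1 \<Longrightarrow> lam x1 r1 t (x1 + r1) = (\<Sum>j\<in>{1..x1+r1-1}. t j)"
  by (auto simp: lam_def Let_def)

definition qvector :: "nat \<Rightarrow> nat \<Rightarrow> (nat \<Rightarrow> 'n) \<Rightarrow> real^'n" where
  "qvector x1 r1 idx = (\<chi> j. qvec x1 r1 (inv_into {1..x1+r1-1} idx j))"

definition facet_index :: "nat \<Rightarrow> (nat \<Rightarrow> 'n) \<Rightarrow> nat \<Rightarrow> 'n option" where
  "facet_index d idx k = (if k = d + 1 then None else Some (idx k))"

lemma qvector_pos: "r1 \<ge> 1 \<Longrightarrow> 0 < qvector x1 r1 idx $ i"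
  by (simp add: qvector_def qvec_pos)

lemma qvector_idx:
  "bij_betw idx {1..x1+r1-1} UNIV \<Longrightarrow> j \<in> {1..x1+r1-1} \<Longrightarrow> qvector x1 r1 idx $ idx j = qvec x1 r1 j"
  by (simp add: qvector_def bij_betw_inv_into_left)

lemma bij_betw_facet_index:
  assumes "bij_betw idx {1..d} UNIV"
  shows "bij_betw (facet_index d idx) {1..d+1} UNIV"
proof -
  have "bij_betw (Some \<circ> idx) {1..d} (range Some)"
    by (rule bij_betw_trans[OF assms]) (simp add: bij_betw_def)
  then have "bij_betw (facet_index d idx) {1..d} (range Some)"
    using bij_betw_cong[of "{1..d}" "facet_index d idx" "Some \<circ> idx"] by (simp add: facet_index_def)
  then have "bij_betw (facet_index d idx) ({1..d} \<union> {d+1}) (range Some \<union> {facet_index d idx (d+1)})"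
    by (intro notIn_Un_bij_betw) (auto simp: facet_index_def)
  moreover have "{1..d} \<union> {d+1} = {1..d+1}" and "range Some \<union> {facet_index d idx (d+1)} = UNIV"
    by (auto simp: facet_index_def UNIV_option_conv)
  ultimately show ?thesis
    by simp
qed

lemma lam_eq_inner_simplex_normal:
  assumes "r1 \<ge> 1" and idx: "bij_betw idx {1..x1+r1-1} UNIV" and "k \<in> {1..x1+r1}"
  shows "lam x1 r1 (\<lambda>j. t $ idx j) k
    = simplex_normal (qvector x1 r1 idx) (facet_index (x1+r1-1) idx k) \<bullet> t"
proof -
  define d where "d = x1 + r1 - 1"
  define q where "q = qvector x1 r1 idx"
  have sum_idx: "(\<Sum>j\<in>{1..d}. g (idx j)) = (\<Sum>i\<in>UNIV. g i)" for g :: "'a \<Rightarrow> real"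
    using sum.reindex_bij_betw[OF idx] by (simp add: d_def)
  show ?thesis
  proof (cases "k = d + 1")
    case True
    have "lam x1 r1 (\<lambda>j. t $ idx j) k = (\<Sum>j\<in>{1..d}. t $ idx j)"
      using lam_last[OF \<open>r1 \<ge> 1\<close>] True \<open>r1 \<ge> 1\<close> by (simp add: d_def)
    also have "\<dots> = simplex_normal q (facet_index d idx k) \<bullet> t"
      using sum_idx[of "\<lambda>i. t $ i"] True by (simp add: facet_index_def inner_simplex_normal_None)
    finally show ?thesis
      by (simp add: d_def q_def)
  next
    case False
    with assms(3) have k: "k \<in> {1..d}"
      using \<open>r1 \<ge> 1\<close> by (auto simp: d_def)
    have q_idx: "q $ idx j = qvec x1 r1 j" if "j \<in> {1..d}" for j
      using qvector_idx[OF idx] that by (simp add: q_def d_def)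
    have "(\<Sum>j\<in>{1..d}. qvec x1 r1 j) = (\<Sum>i\<in>UNIV. q $ i)"
      using q_idx by (simp add: sum_idx[symmetric])
    moreover have "lam x1 r1 (\<lambda>j. t $ idx j) k
        = (\<Sum>j\<in>{1..d}. t $ idx j) - (1 + (\<Sum>j\<in>{1..d}. qvec x1 r1 j)) / qvec x1 r1 k * t $ idx k"
      using lam_eq_facet_form[OF \<open>r1 \<ge> 1\<close> k[unfolded d_def], where t = "\<lambda>j. t $ idx j", folded d_def] .
    ultimately have "lam x1 r1 (\<lambda>j. t $ idx j) k
        = (\<Sum>i\<in>UNIV. t $ i) - (1 + (\<Sum>i\<in>UNIV. q $ i)) / q $ idx k * t $ idx k"
      using sum_idx[of "\<lambda>i. t $ i"] q_idx[OF k] by simp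
    also have "\<dots> = simplex_normal q (facet_index d idx k) \<bullet> t"
      using False by (simp add: facet_index_def inner_simplex_normal_Some facet_coeff_def)
    finally show ?thesis
      by (simp add: d_def q_def)
  qed
qed

theorem proposition2p1:
  fixes r1 x1 :: nat and idx :: "nat \<Rightarrow> 'n::finite"
  assumes "r1 \<ge> 2" and "x1 \<ge> 1"
    and "bij_betw idx {1..x1 + r1 - 1} (UNIV :: 'n set)"
  defines "d \<equiv> x1 + r1 - 1"
  defines "Delta \<equiv> convex hull ((\<lambda>i. axis (idx i) (1::real)) ` {1..d}
                     \<union> {- (\<chi> j. qvec x1 r1 (inv_into {1..d} idx j))})"
  defines "H \<equiv> (\<lambda>K. {t :: real^'n. \<forall>k\<in>K. lam x1 r1 (\<lambda>j. t $ idx j) k \<le> 1})"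
  shows "Delta = H {1..d+1} \<and> (\<forall>k\<in>{1..d+1}. H ({1..d+1} - {k}) \<noteq> Delta)"
proof -
  have "r1 \<ge> 1" and idx: "bij_betw idx {1..d} UNIV"
    using assms(1,3) by (auto simp: d_def)
  have "(\<lambda>i. axis (idx i) 1) ` {1..d} = range (\<lambda>i. axis i (1::real))"
    using bij_betw_imp_surj_on[OF idx] image_image[of "\<lambda>i. axis i (1::real)" idx "{1..d}"] by simp
  then have "Delta = convex hull (range (\<lambda>i. axis i 1) \<union> {- qvector x1 r1 idx})"
    by (simp only: Delta_def qvector_def d_def)
  also have "\<dots> = {t. \<forall>f. simplex_normal (qvector x1 r1 idx) f \<bullet> t \<le> 1}"
    using convex_hull_simplex_eq_halfspaces qvector_pos[OF \<open>r1 \<ge> 1\<close>] by blast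
  finally have Delta: "Delta = {t. \<forall>f. simplex_normal (qvector x1 r1 idx) f \<bullet> t \<le> 1}" .
  show ?thesis
    unfolding H_def
  proof (rule irredundant_description_reindex[OF bij_betw_facet_index[OF idx] _ Delta])
    show "lam x1 r1 (\<lambda>j. t $ idx j) k = simplex_normal (qvector x1 r1 idx) (facet_index d idx k) \<bullet> t"
      if "k \<in> {1..d+1}" for k t
      using lam_eq_inner_simplex_normal[OF \<open>r1 \<ge> 1\<close> assms(3)] that \<open>r1 \<ge> 1\<close> by (simp add: d_def)
    show "\<exists>t. (\<forall>g. g \<noteq> f \<longrightarrow> simplex_normal (qvector x1 r1 idx) g \<bullet> t \<le> 1)
             \<and> 1 < simplex_normal (qvector x1 r1 idx) f \<bullet> t" for f
      using simplex_normal_irredundant qvector_pos[OF \<open>r1 \<ge> 1\<close>] by blast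
  qed
qed

end
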